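(* Let $V\subseteq R_d$ be a Gotzmann monomial vector space and let $V=V_0\oplus x_iV_1$ be its $x_i$-decomposition. Then $V_0$ is Gotzmann in $Q=R/(x_i)$.
   Context: Let $\Bbbk$ be a field, $R=\Bbbk[x_1,\dots,x_n]/(x_1^2,\dots,x_n^2)$, $R_d$ its degree-$d$ component. A monomial vector space is a subspace of some $R_d$ spanned by monomials; for such $V$, $\mathbf m_1V$ is the span of $\{x_jm\}$ over monomials $m\in V$ and all $j$. A subspace $V\subseteq R_d$ is Gotzmann if $|\mathbf m_1V|\le|\mathbf m_1W|$ for every subspace $W\subseteq R_d$ with $|W|=|V|$ ($|\cdot|$ denotes dimension). Fix a variable $x_i$, let $Q=R/(x_i)$ (the analogous squarefree ring in the variables other than $x_i$, with $\mathbf n_1$ the analogous operation and Gotzmann defined analogously in $Q$). The $x_i$-decomposition of a monomial vector space $V\subseteq R_d$ is $V=V_0\oplus x_iV_1$, where $V_0\subseteq Q_d$ is spanned by the monomials of $V$ not divisible by $x_i$ and $V_1\subseteq Q_{d-1}$ is spanned by the monomials $m$ with $x_im\in V$. *)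

theory Defs
  imports Main "HOL.Vector_Spaces" "HOL-Library.Function_Algebras"
begin

text \<open>Squarefree algebra R = k[x_j : j in X]/(x_j^2). An element of R is a
k-valued coefficient function on finite sets of variables (squarefree monomials).\<close>

type_synonym 'k elt = "nat set \<Rightarrow> 'k"

definition fscale :: "'k::field \<Rightarrow> 'k elt \<Rightarrow> 'k elt" where
  "fscale c f = (\<lambda>S. c * f S)"

lemma vector_space_fscale: "vector_space (fscale :: 'k::field \<Rightarrow> 'k elt \<Rightarrow> 'k elt)"
  by unfold_locales (auto simp: fscale_def algebra_simps fun_eq_iff)

abbreviation kspan :: "'k::field elt set \<Rightarrow> 'k elt set" where
  "kspan \<equiv> module.span fscale"

abbreviation ksubspace :: "'k::field elt set \<Rightarrow> bool" where
  "ksubspace \<equiv> module.subspace fscale"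

abbreviation kdim :: "'k::field elt set \<Rightarrow> nat" where
  "kdim \<equiv> vector_space.dim fscale"

definition Rdeg :: "nat set \<Rightarrow> nat \<Rightarrow> 'k::field elt set" where
  "Rdeg X d = {f. \<forall>S. f S \<noteq> 0 \<longrightarrow> S \<subseteq> X \<and> card S = d}"

definition mono :: "nat set \<Rightarrow> 'k::field elt" where
  "mono S = (\<lambda>T. if T = S then 1 else 0)"

text \<open>Multiplication by the variable x_j (using x_j^2 = 0).\<close>
definition mulvar :: "nat \<Rightarrow> 'k::field elt \<Rightarrow> 'k elt" where
  "mulvar j f = (\<lambda>T. if j \<in> T then f (T - {j}) else 0)"

definition m1 :: "nat set \<Rightarrow> 'k::field elt set \<Rightarrow> 'k elt set" where
  "m1 X V = kspan (\<Union>j\<in>X. mulvar j ` V)"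

definition monomial_space :: "nat set \<Rightarrow> nat \<Rightarrow> 'k::field elt set \<Rightarrow> bool" where
  "monomial_space X d V \<longleftrightarrow>
     (\<exists>M. M \<subseteq> {S. S \<subseteq> X \<and> card S = d} \<and> V = kspan (mono ` M))"

definition gotzmann :: "nat set \<Rightarrow> nat \<Rightarrow> 'k::field elt set \<Rightarrow> bool" where
  "gotzmann X d V \<longleftrightarrow> ksubspace V \<and> V \<subseteq> Rdeg X d \<and>
     (\<forall>W :: 'k elt set. ksubspace W \<and> W \<subseteq> Rdeg X d \<and> kdim W = kdim V \<longrightarrow> kdim (m1 X V) \<le> kdim (m1 X W))"

definition decomp0 :: "nat \<Rightarrow> 'k::field elt set \<Rightarrow> 'k elt set" where
  "decomp0 i V = kspan (mono ` {S. i \<notin> S \<and> mono S \<in> V})"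

definition decomp1 :: "nat \<Rightarrow> 'k::field elt set \<Rightarrow> 'k elt set" where
  "decomp1 i V = kspan (mono ` {S. i \<notin> S \<and> mulvar i (mono S) \<in> V})"

end

theory Submission
  imports Defs
begin

(* Order the finite sets of variables by their binary value
   binval S = (sum of 2^x over x in S). For a monomial space V = span {x_S | S in M} we have
   dim V = |M| and m_1 V = span of the monomials of the upper shadow of M. Conversely, any
   subspace W of R_d can be replaced by its family of initial (binval-largest) monomials,
   which has dim W elements and whose upper shadow consists of initial monomials of m_1 W.
   Hence a monomial space is Gotzmann iff its family M has minimal upper shadow among all
   families of d-sets of the same size (gotzmann_span_monos_iff).
   The x_i-decomposition corresponds to splitting M into its deletion M_0 (sets avoiding i)
   and its link M_1; the upper shadow of M is the disjoint union of the shadow of M_0 and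
   x_i times (M_0 together with the shadow of M_1). By the Kruskal-Katona theorem for upper
   shadows, proved with Frankl's compressions, final segments of the binary order have
   minimal shadows, their shadows are again final segments, and final segments are nested.
   So if M_0 were not shadow-minimal, a final segment replacing M_0 and one replacing M_1
   would give a family of the size of M with smaller shadow (shadow_minimal_deletion). *)

text \<open>The binary value of a finite set of variables; comparing binary values is the
  (squarefree) reverse-lexicographic order used throughout.\<close>
definition binval :: "nat set \<Rightarrow> nat" where
  "binval S = (\<Sum>x\<in>S. 2 ^ x)"

lemma binval_insert: "finite A \<Longrightarrow> x \<notin> A \<Longrightarrow> binval (insert x A) = binval A + 2 ^ x"
  unfolding binval_def by simp

lemma binval_union: "finite A \<Longrightarrow> finite B \<Longrightarrow> A \<inter> B = {} \<Longrightarrow> binval (A \<union> B) = binval A + binval B"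
  unfolding binval_def by (rule sum.union_disjoint)

lemma binval_mono: "finite B \<Longrightarrow> A \<subseteq> B \<Longrightarrow> binval A \<le> binval B"
  unfolding binval_def by (rule sum_mono2) auto

lemma binval_split:
  assumes "finite A"
  shows "binval A = binval (A - B) + binval (A \<inter> B)"
proof -
  have "A = (A - B) \<union> (A \<inter> B)" by blast
  then have "binval A = binval ((A - B) \<union> (A \<inter> B))" by simp
  also have "\<dots> = binval (A - B) + binval (A \<inter> B)"
    using assms by (intro binval_union) auto
  finally show ?thesis .
qed

lemma binval_bound: "finite P \<Longrightarrow> \<forall>x\<in>P. x < m \<Longrightarrow> binval P < 2 ^ m"
proof -
  assume "finite P" "\<forall>x\<in>P. x < m"
  then have "binval P \<le> (\<Sum>x\<in>{0..<m}. 2 ^ x)"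
    unfolding binval_def by (intro sum_mono2) auto
  also have "\<dots> < 2 ^ m" by (simp add: sum_power2)
  finally show ?thesis .
qed

lemma binval_less_disjoint:
  assumes "finite P" "finite Q" "P \<inter> Q = {}" "P \<union> Q \<noteq> {}" "Max (P \<union> Q) \<in> Q"
  shows "binval P < binval Q"
proof -
  let ?m = "Max (P \<union> Q)"
  have "p < ?m" if "p \<in> P" for p
  proof -
    have "p \<le> ?m" using that assms(1,2) by simp
    moreover have "p \<noteq> ?m" using that assms(3,5) by auto
    ultimately show ?thesis by simp
  qed
  then have "binval P < 2 ^ ?m" using assms(1) by (intro binval_bound) auto
  also have "2 ^ ?m \<le> binval Q" unfolding binval_def using assms(2,5) by (metis member_le_sum zero_le)
  finally show ?thesis .
qed

lemma binval_less_iff: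
  assumes "finite A" "finite B" "A \<noteq> B"
  shows "binval A < binval B \<longleftrightarrow> Max ((A - B) \<union> (B - A)) \<in> B"
proof -
  let ?P = "A - B" and ?Q = "B - A"
  have fin: "finite ?P" "finite ?Q" and disj: "?P \<inter> ?Q = {}" using assms by auto
  have ne: "?P \<union> ?Q \<noteq> {}" using assms(3) by auto
  have split: "binval A < binval B \<longleftrightarrow> binval ?P < binval ?Q"
    using binval_split[OF assms(1), of B] binval_split[OF assms(2), of A] by (simp add: Int_commute)
  have "Max (?P \<union> ?Q) \<in> ?P \<union> ?Q" using fin ne by (intro Max_in) auto
  then consider "Max (?P \<union> ?Q) \<in> ?Q" | "Max (?P \<union> ?Q) \<in> ?P" by blast
  then show ?thesis
  proof cases
    case 1
    then show ?thesis using binval_less_disjoint[OF fin disj ne] split by auto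
  next
    case 2
    then have "binval ?Q < binval ?P"
      using binval_less_disjoint[of ?Q ?P] fin disj ne by (auto simp: Un_commute Int_commute)
    then show ?thesis using 2 split by auto
  qed
qed

lemma binval_less_or_greater:
  assumes "finite A" "finite B" "A \<noteq> B"
  shows "binval A < binval B \<or> binval B < binval A"
proof -
  have "Max ((A - B) \<union> (B - A)) \<in> (A - B) \<union> (B - A)"
    using assms by (intro Max_in) auto
  then show ?thesis
    using binval_less_iff[OF assms] binval_less_iff[of B A] assms by (auto simp: Un_commute)
qed

lemma binval_less_disjoint_iff:
  assumes "finite P" "finite Q" "P \<inter> Q = {}" "P \<union> Q \<noteq> {}"
  shows "binval P < binval Q \<longleftrightarrow> Max (P \<union> Q) \<in> Q"
proof -
  have "P \<noteq> Q" "(P - Q) \<union> (Q - P) = P \<union> Q" using assms(3,4) by auto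
  then show ?thesis using binval_less_iff[OF assms(1,2)] by simp
qed

lemma binval_inj: "finite A \<Longrightarrow> finite B \<Longrightarrow> binval A = binval B \<Longrightarrow> A = B"
  using binval_less_or_greater[of A B] by (cases "A = B") auto

text \<open>Squarefree monomials of degree \<open>k\<close> in the variables \<open>Y\<close> are the \<open>k\<close>-subsets of \<open>Y\<close>;
  multiplying a family of monomials by all variables gives its upper shadow.\<close>
definition ksets :: "nat set \<Rightarrow> nat \<Rightarrow> nat set set" where
  "ksets Y k = {S. S \<subseteq> Y \<and> card S = k}"

definition upshadow :: "nat set \<Rightarrow> nat set set \<Rightarrow> nat set set" where
  "upshadow Y F = {insert x S | S x. S \<in> F \<and> x \<in> Y \<and> x \<notin> S}"

lemma ksets_finite: "finite Y \<Longrightarrow> finite (ksets Y k)"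
  unfolding ksets_def by (rule finite_subset[of _ "Pow Y"]) auto

lemma ksets_mem_finite: "finite Y \<Longrightarrow> A \<in> ksets Y k \<Longrightarrow> finite A"
  unfolding ksets_def by (auto intro: finite_subset)

lemma ksets_Pow: "ksets Y k \<subseteq> Pow Y"
  unfolding ksets_def by blast

lemma ksets_mono: "Y \<subseteq> X \<Longrightarrow> ksets Y k \<subseteq> ksets X k"
  unfolding ksets_def by auto

lemma upshadowI: "S \<in> F \<Longrightarrow> x \<in> Y \<Longrightarrow> x \<notin> S \<Longrightarrow> insert x S \<in> upshadow Y F"
  unfolding upshadow_def by blast

lemma upshadowE:
  assumes "D \<in> upshadow Y F"
  obtains S x where "S \<in> F" "x \<in> Y" "x \<notin> S" "D = insert x S"
  using assms unfolding upshadow_def by blast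

lemma upshadow_empty [simp]: "upshadow Y {} = {}"
  unfolding upshadow_def by blast

lemma upshadow_mono: "F \<subseteq> G \<Longrightarrow> upshadow Y F \<subseteq> upshadow Y G"
  unfolding upshadow_def by blast

lemma upshadow_Pow: "F \<subseteq> Pow Y \<Longrightarrow> upshadow Y F \<subseteq> Pow Y"
  unfolding upshadow_def by blast

lemma finite_upshadow: "finite Y \<Longrightarrow> F \<subseteq> Pow Y \<Longrightarrow> finite (upshadow Y F)"
  using upshadow_Pow by (metis finite_Pow_iff finite_subset)

lemma upshadow_ksets: "finite Y \<Longrightarrow> F \<subseteq> ksets Y k \<Longrightarrow> upshadow Y F \<subseteq> ksets Y (Suc k)"
  by (auto elim!: upshadowE simp: ksets_def finite_subset)

definition compressed :: "nat set \<Rightarrow> nat set \<Rightarrow> nat set set \<Rightarrow> bool" where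
  "compressed U V F \<longleftrightarrow> (\<forall>A\<in>F. V \<subseteq> A \<and> U \<inter> A = {} \<longrightarrow> (A - V) \<union> U \<in> F)"

definition movable :: "nat set \<Rightarrow> nat set \<Rightarrow> nat set set \<Rightarrow> nat set set" where
  "movable U V F = {A\<in>F. V \<subseteq> A \<and> U \<inter> A = {} \<and> (A - V) \<union> U \<notin> F}"

definition compress :: "nat set \<Rightarrow> nat set \<Rightarrow> nat set set \<Rightarrow> nat set set" where
  "compress U V F = (F - movable U V F) \<union> (\<lambda>A. (A - V) \<union> U) ` movable U V F"

lemma compressed_empty: "compressed {} {} F"
  unfolding compressed_def by auto

lemma movable_subset: "movable U V F \<subseteq> F"
  unfolding movable_def by auto

lemma inj_on_swap: "inj_on (\<lambda>A. (A - V) \<union> U) (movable U V F)"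
proof (rule inj_onI)
  fix A B assume A: "A \<in> movable U V F" and B: "B \<in> movable U V F"
    and eq: "(A - V) \<union> U = (B - V) \<union> U"
  have "A = (((A - V) \<union> U) - U) \<union> V" using A unfolding movable_def by auto
  also have "\<dots> = (((B - V) \<union> U) - U) \<union> V" using eq by simp
  also have "\<dots> = B" using B unfolding movable_def by auto
  finally show "A = B" .
qed

lemma compress_disjoint: "(F - movable U V F) \<inter> (\<lambda>A. (A - V) \<union> U) ` movable U V F = {}"
  unfolding movable_def by auto

lemma card_compress:
  assumes "finite F"
  shows "card (compress U V F) = card F"
proof -
  let ?g = "\<lambda>A. (A - V) \<union> U" and ?M = "movable U V F"
  have "card (compress U V F) = card (F - ?M) + card (?g ` ?M)"
    unfolding compress_def using assms movable_subset[of U V F] compress_disjoint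
    by (intro card_Un_disjoint) (auto intro: finite_subset)
  also have "card (?g ` ?M) = card ?M" by (rule card_image[OF inj_on_swap])
  also have "card (F - ?M) + card ?M = card F"
    using assms movable_subset by (metis card_Diff_subset card_mono finite_subset le_add_diff_inverse2)
  finally show ?thesis .
qed

lemma compress_ksets:
  assumes Y: "finite Y" and F: "F \<subseteq> ksets Y k" and UY: "U \<subseteq> Y"
    and card: "card U = card V" and UV: "U \<inter> V = {}"
  shows "compress U V F \<subseteq> ksets Y k"
proof
  fix E assume "E \<in> compress U V F"
  then consider "E \<in> F" | A where "A \<in> F" "V \<subseteq> A" "U \<inter> A = {}" "E = (A - V) \<union> U"
    unfolding compress_def movable_def by auto
  then show "E \<in> ksets Y k"
  proof cases
    case 1 then show ?thesis using F by auto
  next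
    case 2
    have AY: "A \<subseteq> Y" and cA: "card A = k" using 2(1) F unfolding ksets_def by auto
    have fin: "finite A" "finite U" "finite V" using AY UY 2(2) Y by (auto intro: finite_subset)
    have "card E = card (A - V) + card U"
      unfolding 2(4) using fin 2(3) by (intro card_Un_disjoint) auto
    also have "card (A - V) = card A - card V" using card_Diff_subset[OF fin(3) 2(2)] .
    finally have "card E = k" using cA card_mono[OF fin(1) 2(2)] card by simp
    moreover have "E \<subseteq> Y" using AY UY 2(4) by blast
    ultimately show ?thesis unfolding ksets_def by simp
  qed
qed

text \<open>A non-trivial compression from \<open>V\<close> to a set \<open>U\<close> of larger binary value strictly
  increases the total binary value of the family; this is the termination measure.\<close>
lemma sum_binval_compress:
  assumes F: "finite F" "\<forall>A\<in>F. finite A" and fU: "finite U"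
    and ne: "movable U V F \<noteq> {}" and less: "binval V < binval U"
  shows "(\<Sum>A\<in>F. binval A) < (\<Sum>A\<in>compress U V F. binval A)"
proof -
  let ?g = "\<lambda>A. (A - V) \<union> U" and ?M = "movable U V F"
  have fM: "finite ?M" using F(1) movable_subset by (rule finite_subset[rotated])
  have gt: "binval A < binval (?g A)" if "A \<in> ?M" for A
  proof -
    have A: "V \<subseteq> A" "U \<inter> A = {}" "finite A" using that F(2) unfolding movable_def by auto
    have "binval A = binval (A - V) + binval V"
      using binval_split[OF A(3), of V] A(1) by (simp add: Int_absorb1)
    moreover have "binval (?g A) = binval (A - V) + binval U"
      using A fU by (intro binval_union) auto
    ultimately show ?thesis using less by simp
  qed
  have "(\<Sum>A\<in>F. binval A) = (\<Sum>A\<in>F - ?M. binval A) + (\<Sum>A\<in>?M. binval A)"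
    using F(1) movable_subset by (metis sum.subset_diff)
  also have "(\<Sum>A\<in>?M. binval A) < (\<Sum>A\<in>?M. binval (?g A))"
    using fM gt ne by (intro sum_strict_mono) auto
  also have "(\<Sum>A\<in>?M. binval (?g A)) = (\<Sum>A\<in>?g ` ?M. binval A)"
    by (simp add: sum.reindex[OF inj_on_swap])
  also have "(\<Sum>A\<in>F - ?M. binval A) + (\<Sum>A\<in>?g ` ?M. binval A) = (\<Sum>A\<in>compress U V F. binval A)"
    unfolding compress_def using F(1) fM compress_disjoint
    by (intro sum.union_disjoint[symmetric]) auto
  finally show ?thesis by simp
qed

lemma upshadow_from_compressed:
  assumes comp: "compressed (U - {u}) (V - {v}) F" and E: "E \<in> F" "V - {v} \<subseteq> E" "U \<inter> E = {}"
    and u: "u \<in> U" and UY: "U \<subseteq> Y"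
  shows "insert u ((E - (V - {v})) \<union> (U - {u})) \<in> upshadow Y F"
proof (rule upshadowI)
  show "(E - (V - {v})) \<union> (U - {u}) \<in> F" using comp E unfolding compressed_def by blast
  show "u \<in> Y" using u UY by blast
  show "u \<notin> (E - (V - {v})) \<union> (U - {u})" using u E(3) by blast
qed

lemma compress_keeps_disjoint:
  assumes "E \<in> compress U V F" "U \<noteq> {}" "U \<inter> E = {}"
  shows "E \<in> F \<and> (V \<subseteq> E \<longrightarrow> (E - V) \<union> U \<in> F)"
  using assms unfolding compress_def movable_def by auto

lemma compress_gained_shadow:
  assumes UY: "U \<subseteq> Y"
    and hyp: "\<forall>v\<in>V. \<exists>u\<in>U. compressed (U - {u}) (V - {v}) F"
    and D: "D \<in> upshadow Y (compress U V F)" "D \<notin> upshadow Y F"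
  obtains A x where "A \<in> F" "V \<subseteq> A" "U \<inter> A = {}" "x \<in> Y" "x \<notin> A" "x \<notin> U" "x \<notin> V"
    "D = insert x ((A - V) \<union> U)"
proof -
  obtain B x where B: "B \<in> compress U V F" "x \<in> Y" "x \<notin> B" "D = insert x B"
    using D(1) by (rule upshadowE)
  have "B \<notin> F" using B D(2) upshadowI by blast
  then obtain A where A: "A \<in> F" "V \<subseteq> A" "U \<inter> A = {}" "B = (A - V) \<union> U"
    using B(1) unfolding compress_def movable_def by auto
  have "x \<notin> V"
  proof
    assume xV: "x \<in> V"
    then obtain u where u: "u \<in> U" "compressed (U - {u}) (V - {x}) F" using hyp by blast
    have "insert u ((A - (V - {x})) \<union> (U - {u})) \<in> upshadow Y F"
      using u A by (intro upshadow_from_compressed[OF u(2)]) (auto simp: UY)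
    moreover have "insert u ((A - (V - {x})) \<union> (U - {u})) = D"
      using B(4) A xV u(1) by auto
    ultimately show False using D(2) by simp
  qed
  then show thesis using that[OF A(1-3) B(2)] A B by auto
qed

lemma compress_lost_shadow:
  assumes UY: "U \<subseteq> Y" and Une: "U \<noteq> {}"
    and hyp: "\<forall>v\<in>V. \<exists>u\<in>U. compressed (U - {u}) (V - {v}) F"
    and A: "V \<subseteq> A" "U \<inter> A = {}" and x: "x \<notin> U" "x \<notin> V"
    and D: "insert x ((A - V) \<union> U) \<notin> upshadow Y F"
  shows "insert x A \<notin> upshadow Y (compress U V F)"
proof
  let ?D = "insert x ((A - V) \<union> U)"
  assume "insert x A \<in> upshadow Y (compress U V F)"
  then obtain E y where E: "E \<in> compress U V F" "y \<in> Y" "y \<notin> E" "insert x A = insert y E"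
    by (rule upshadowE)
  have UE: "U \<inter> E = {}" and yU: "y \<notin> U" using E(4) A(2) x(1) by auto
  have EF: "E \<in> F" "V \<subseteq> E \<Longrightarrow> (E - V) \<union> U \<in> F" using compress_keeps_disjoint[OF E(1) Une UE] by auto
  show False
  proof (cases "y \<in> V")
    case False
    have "V \<subseteq> insert y E" using E(4) A(1) by (metis subset_insertI2)
    then have "V \<subseteq> E" using False by blast
    then have "insert y ((E - V) \<union> U) \<in> upshadow Y F"
      using EF E(2,3) yU by (intro upshadowI) auto
    moreover have "insert y ((E - V) \<union> U) = ?D" using E(4) A x False by auto
    ultimately show False using D by simp
  next
    case True
    then obtain u where u: "u \<in> U" "compressed (U - {u}) (V - {y}) F" using hyp by blast
    have "insert u ((E - (V - {y})) \<union> (U - {u})) \<in> upshadow Y F"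
      using u EF(1) UE E(4) A(1) by (intro upshadow_from_compressed[OF u(2)]) (auto simp: UY)
    moreover have "insert u ((E - (V - {y})) \<union> (U - {u})) = ?D"
      using E(3,4) A x True u(1) by auto
    ultimately show False using D by simp
  qed
qed

text \<open>The map \<open>D \<mapsto> (D - U) \<union> V\<close> injects
  the gained shadow sets into the lost ones.\<close>
lemma compress_upshadow_le:
  assumes Y: "finite Y" and F: "F \<subseteq> Pow Y" and UY: "U \<subseteq> Y"
    and Une: "U \<noteq> {}" and UV: "U \<inter> V = {}"
    and hyp: "\<forall>v\<in>V. \<exists>u\<in>U. compressed (U - {u}) (V - {v}) F"
  shows "card (upshadow Y (compress U V F)) \<le> card (upshadow Y F)"
proof -
  let ?C = "compress U V F" and ?phi = "\<lambda>D. (D - U) \<union> V"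
  let ?gain = "upshadow Y ?C - upshadow Y F" and ?loss = "upshadow Y F - upshadow Y ?C"
  have CY: "?C \<subseteq> Pow Y" using F UY unfolding compress_def movable_def by auto
  have fin: "finite (upshadow Y F)" "finite (upshadow Y ?C)"
    using finite_upshadow[OF Y] F CY by auto
  have gain: "U \<subseteq> D \<and> D = (?phi D - V) \<union> U \<and> ?phi D \<in> ?loss" if hD: "D \<in> ?gain" for D
  proof -
    obtain A x where A: "A \<in> F" "V \<subseteq> A" "U \<inter> A = {}" "x \<in> Y" "x \<notin> A" "x \<notin> U" "x \<notin> V"
      and D: "D = insert x ((A - V) \<union> U)"
      using compress_gained_shadow[OF UY hyp, of D] hD by blast
    have phi: "?phi D = insert x A" using D A(2,3,6,7) UV by auto
    have "?phi D \<in> upshadow Y F" using phi upshadowI[OF A(1,4,5)] by simp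
    moreover have "?phi D \<notin> upshadow Y ?C"
      using phi compress_lost_shadow[OF UY Une hyp A(2,3,6,7)] hD D by auto
    ultimately show ?thesis using D A UV by auto
  qed
  have "inj_on ?phi ?gain" by (rule inj_onI) (metis gain)
  then have "card ?gain \<le> card ?loss"
    using gain fin by (intro card_inj_on_le) auto
  moreover have "card (upshadow Y ?C) = card (upshadow Y ?C \<inter> upshadow Y F) + card ?gain"
    using fin by (metis Diff_Diff_Int card_Diff_subset_Int card_Int_Diff finite_Diff)
  moreover have "card (upshadow Y F) = card (upshadow Y F \<inter> upshadow Y ?C) + card ?loss"
    using fin by (metis card_Int_Diff)
  ultimately show ?thesis by (simp add: Int_commute)
qed

text \<open>A final segment of \<open>k\<close>-sets is closed upwards in the binary order; these are the
  extremal families of the Kruskal-Katona theorem.\<close>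
definition final_segment :: "nat set \<Rightarrow> nat \<Rightarrow> nat set set \<Rightarrow> bool" where
  "final_segment Y k G \<longleftrightarrow>
     G \<subseteq> ksets Y k \<and> (\<forall>A\<in>G. \<forall>B\<in>ksets Y k. binval A < binval B \<longrightarrow> B \<in> G)"

text \<open>Removing the minimum of \<open>U\<close> and any element of \<open>V\<close> keeps \<open>V\<close> below \<open>U\<close>, because the
  overall maximum stays in \<open>U\<close>; this makes the minimal-pair argument below work.\<close>
lemma binval_less_remove_min:
  assumes fin: "finite U" "finite V" and UV: "U \<inter> V = {}" and two: "2 \<le> card U"
    and less: "binval V < binval U"
  shows "binval (V - {v}) < binval (U - {Min U})"
proof -
  let ?m = "Max (U \<union> V)"
  have Une: "U \<noteq> {}" using two by auto
  have mU: "?m \<in> U"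
    using binval_less_disjoint_iff[of V U] fin UV Une less by (simp add: Un_commute Int_commute)
  have "Min U \<noteq> ?m"
  proof
    assume eq: "Min U = ?m"
    have "x = Min U" if "x \<in> U" for x
      using that fin eq by (metis Max_ge Min_le Un_iff finite_Un order_antisym)
    then have "U \<subseteq> {Min U}" by blast
    then have "card U \<le> 1" using card_mono[of "{Min U}" U] by simp
    then show False using two by simp
  qed
  then have mU': "?m \<in> U - {Min U}" using mU by simp
  have "Max ((V - {v}) \<union> (U - {Min U})) = ?m"
    using mU' fin by (intro Max_eqI) auto
  then show ?thesis
    using binval_less_disjoint_iff[of "V - {v}" "U - {Min U}"] fin UV mU' by auto
qed

definition compression_pair :: "nat set \<Rightarrow> nat set set \<Rightarrow> nat set \<Rightarrow> nat set \<Rightarrow> bool" where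
  "compression_pair Y F U V \<longleftrightarrow> U \<subseteq> Y \<and> V \<subseteq> Y \<and> U \<inter> V = {} \<and> card U = card V \<and> U \<noteq> {}
     \<and> binval V < binval U \<and> \<not> compressed U V F"

lemma compression_pair_witness:
  assumes Y: "finite Y" and AB: "A \<in> F" "B \<notin> F" "A \<in> ksets Y k" "B \<in> ksets Y k"
    and less: "binval A < binval B"
  shows "compression_pair Y F (B - A) (A - B)"
  unfolding compression_pair_def
proof (intro conjI)
  have fin: "finite A" "finite B" using AB(3,4) ksets_mem_finite[OF Y] by auto
  have cAB: "card A = card B" using AB(3,4) unfolding ksets_def by simp
  show "B - A \<subseteq> Y" "A - B \<subseteq> Y" "(B - A) \<inter> (A - B) = {}" using AB(3,4) unfolding ksets_def by auto
  show "card (B - A) = card (A - B)"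
    using cAB fin by (metis Int_commute card_Diff_subset_Int finite_Int)
  show "B - A \<noteq> {}"
    using cAB fin AB(1,2) by (metis Diff_eq_empty_iff card_subset_eq)
  show "binval (A - B) < binval (B - A)"
    using less binval_split[OF fin(1), of B] binval_split[OF fin(2), of A] by (simp add: Int_commute)
  have "(A - (A - B)) \<union> (B - A) = B" by auto
  then show "\<not> compressed (B - A) (A - B) F"
    using AB(1,2) unfolding compressed_def by (metis Diff_disjoint Diff_subset Int_commute)
qed

lemma compression_pair_shrink:
  assumes Y: "finite Y" and P: "compression_pair Y F U V" and v: "v \<in> V" and two: "2 \<le> card U"
    and nc: "\<not> compressed (U - {Min U}) (V - {v}) F"
  shows "compression_pair Y F (U - {Min U}) (V - {v})"
proof -
  have fin: "finite U" "finite V" using P Y unfolding compression_pair_def by (auto intro: finite_subset)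
  have uU: "Min U \<in> U" using P fin unfolding compression_pair_def by simp
  have c: "card (U - {Min U}) = card U - 1" using uU fin by simp
  have "U - {Min U} \<noteq> {}"
  proof
    assume "U - {Min U} = {}"
    then have "card (U - {Min U}) = 0" by (simp only: card.empty)
    then show False using c two by linarith
  qed
  moreover have "card (U - {Min U}) = card (V - {v})" using P v fin c unfolding compression_pair_def by simp
  moreover have "binval (V - {v}) < binval (U - {Min U})"
    using binval_less_remove_min[OF fin _ two] P unfolding compression_pair_def by blast
  ultimately show ?thesis using P nc unfolding compression_pair_def by auto
qed

text \<open>Choosing a compression pair \<open>(U, V)\<close> with \<open>|U|\<close> minimal guarantees the hypothesis
  of the compression lemma: all pairs \<open>(U - {Min U}, V - {v})\<close> are compressed.\<close>
lemma exists_compression_pair: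
  assumes Y: "finite Y" and F: "F \<subseteq> ksets Y k" and nf: "\<not> final_segment Y k F"
  obtains U V where "compression_pair Y F U V" "\<forall>v\<in>V. \<exists>u\<in>U. compressed (U - {u}) (V - {v}) F"
proof -
  obtain A B where AB: "A \<in> F" "B \<in> ksets Y k" "binval A < binval B" "B \<notin> F"
    using F nf unfolding final_segment_def by blast
  have "A \<in> ksets Y k" using AB(1) F by blast
  then have "compression_pair Y F (B - A) (A - B)"
    using compression_pair_witness[OF Y AB(1,4)] AB(2,3) by blast
  then obtain p where p: "compression_pair Y F (fst p) (snd p)"
    and p_least: "\<forall>q. compression_pair Y F (fst q) (snd q) \<longrightarrow> card (fst p) \<le> card (fst q)"
    using ex_has_least_nat[of "\<lambda>p. compression_pair Y F (fst p) (snd p)" "(B - A, A - B)"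
        "\<lambda>p. card (fst p)"] by auto
  obtain U V where pUV: "p = (U, V)" by (cases p)
  have P: "compression_pair Y F U V" using p pUV by simp
  have least: "card U \<le> card U'" if "compression_pair Y F U' V'" for U' V'
    using p_least that pUV by (metis fst_conv snd_conv)
  have fin: "finite U" "finite V" using P Y unfolding compression_pair_def by (auto intro: finite_subset)
  have hyp: "\<exists>u\<in>U. compressed (U - {u}) (V - {v}) F" if v: "v \<in> V" for v
  proof (cases "card U = 1")
    case True
    then obtain u where "U = {u}" by (rule card_1_singletonE)
    moreover obtain w where "V = {w}" using True P unfolding compression_pair_def by (metis card_1_singletonE)
    ultimately show ?thesis using v compressed_empty by auto
  next
    case False
    moreover have "U \<noteq> {}" using P unfolding compression_pair_def by blast
    then have "card U \<noteq> 0" using fin by simp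
    ultimately have two: "2 \<le> card U" by linarith
    have "Min U \<in> U" using \<open>U \<noteq> {}\<close> fin by simp
    moreover have "compressed (U - {Min U}) (V - {v}) F"
    proof (rule ccontr)
      assume "\<not> ?thesis"
      then have "compression_pair Y F (U - {Min U}) (V - {v})"
        by (rule compression_pair_shrink[OF Y P v two])
      then have "card U \<le> card (U - {Min U})" by (rule least)
      then show False using \<open>Min U \<in> U\<close> fin two by (simp add: card_Diff1_less_iff)
    qed
    ultimately show ?thesis by blast
  qed
  show thesis using P hyp by (intro that) auto
qed

text \<open>Compressions increase the total binary value, so finitely many of them reach a final
  segment.\<close>
theorem kruskal_katona:
  assumes Y: "finite Y"
  shows "F \<subseteq> ksets Y k \<Longrightarrow>
    \<exists>G. final_segment Y k G \<and> card G = card F \<and> card (upshadow Y G) \<le> card (upshadow Y F)"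
proof (induction "(\<Sum>A\<in>ksets Y k. binval A) - (\<Sum>A\<in>F. binval A)" arbitrary: F rule: less_induct)
  case less
  show ?case
  proof (cases "final_segment Y k F")
    case False
    obtain U V where P: "compression_pair Y F U V"
      and hyp: "\<forall>v\<in>V. \<exists>u\<in>U. compressed (U - {u}) (V - {v}) F"
      using exists_compression_pair[OF Y less.prems False] by blast
    have UV: "U \<subseteq> Y" "U \<inter> V = {}" "card U = card V" "U \<noteq> {}" "binval V < binval U"
      "\<not> compressed U V F"
      using P unfolding compression_pair_def by auto
    let ?C = "compress U V F"
    have fF: "finite F" "\<forall>A\<in>F. finite A"
      using less.prems ksets_finite[OF Y] ksets_mem_finite[OF Y] by (auto intro: finite_subset)
    have C: "?C \<subseteq> ksets Y k" using compress_ksets[OF Y less.prems UV(1,3,2)] .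
    have "(\<Sum>A\<in>F. binval A) < (\<Sum>A\<in>?C. binval A)"
      using UV(6) fF UV(1) Y by (intro sum_binval_compress[OF fF _ _ UV(5)])
        (auto simp: compressed_def movable_def intro: finite_subset)
    moreover have "(\<Sum>A\<in>?C. binval A) \<le> (\<Sum>A\<in>ksets Y k. binval A)"
      using C ksets_finite[OF Y] by (intro sum_mono2) auto
    ultimately obtain G where G: "final_segment Y k G" "card G = card ?C"
      "card (upshadow Y G) \<le> card (upshadow Y ?C)"
      using less.hyps[OF _ C] by (meson diff_less_mono2 order_less_le_trans)
    moreover have "card ?C = card F" using card_compress[OF fF(1)] .
    moreover have "card (upshadow Y ?C) \<le> card (upshadow Y F)"
      using less.prems UV hyp unfolding ksets_def by (intro compress_upshadow_le[OF Y]) auto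
    ultimately show ?thesis by auto
  qed blast
qed

lemma final_segment_comparable:
  assumes Y: "finite Y" and G: "final_segment Y k G" and H: "final_segment Y k H"
  shows "G \<subseteq> H \<or> H \<subseteq> G"
proof (rule ccontr)
  assume "\<not> (G \<subseteq> H \<or> H \<subseteq> G)"
  then obtain A B where AB: "A \<in> G" "A \<notin> H" "B \<in> H" "B \<notin> G" by blast
  have k: "A \<in> ksets Y k" "B \<in> ksets Y k" using AB G H unfolding final_segment_def by auto
  have "binval A < binval B \<or> binval B < binval A"
    using AB k ksets_mem_finite[OF Y] by (intro binval_less_or_greater) auto
  then show False using AB k G H unfolding final_segment_def by blast
qed

lemma final_segment_card_Un:
  assumes Y: "finite Y" and G: "final_segment Y k G" and H: "final_segment Y k H"
  shows "card (G \<union> H) = max (card G) (card H)"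
proof -
  have "finite G" "finite H"
    using G H ksets_finite[OF Y] unfolding final_segment_def by (auto intro: finite_subset)
  then show ?thesis using final_segment_comparable[OF Y G H]
    by (auto simp: sup.absorb1 sup.absorb2 max_def dest: card_mono)
qed

lemma exists_removal_above:
  assumes fin: "finite A" "finite E" and card: "card E = Suc (card A)"
    and less: "binval A < binval E"
  obtains y where "y \<in> E" "E - {y} = A \<or> binval A < binval (E - {y})"
proof -
  let ?S = "(A - E) \<union> (E - A)"
  define n where "n = Max ?S"
  have AE: "A \<noteq> E" using less by auto
  have "n \<in> ?S" unfolding n_def using AE fin by (intro Max_in) auto
  moreover have "n \<in> E" using binval_less_iff[OF fin AE] less n_def by simp
  ultimately have nE: "n \<in> E" "n \<notin> A" by auto
  have agree: "z \<in> A \<longleftrightarrow> z \<in> E" if "n < z" for z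
  proof (rule ccontr)
    assume "\<not> (z \<in> A \<longleftrightarrow> z \<in> E)"
    then have "z \<le> n" unfolding n_def using fin by (intro Max_ge) auto
    then show False using that by simp
  qed
  show thesis
  proof (cases "\<exists>y\<in>E. y < n")
    case True
    then obtain y where y: "y \<in> E" "y < n" by blast
    have AE': "A \<noteq> E - {y}" using nE y by auto
    have "Max ((A - (E - {y})) \<union> ((E - {y}) - A)) = n"
      using nE y agree fin by (intro Max_eqI) (auto simp: not_less[symmetric])
    then have "binval A < binval (E - {y})"
      using binval_less_iff[OF fin(1) _ AE'] nE y fin by simp
    then show thesis using that y by blast
  next
    case False
    have "E - {n} \<subseteq> A"
    proof
      fix z assume z: "z \<in> E - {n}"
      then have "n < z" using False by (auto simp: not_less order_le_less)
      then show "z \<in> A" using agree z by blast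
    qed
    moreover have "card (E - {n}) = card A" using card nE fin by simp
    ultimately have "E - {n} = A" using fin by (simp add: card_subset_eq)
    then show thesis using that nE by blast
  qed
qed

lemma final_segment_upshadow:
  assumes Y: "finite Y" and B: "final_segment Y k B"
  shows "final_segment Y (Suc k) (upshadow Y B)"
  unfolding final_segment_def
proof (intro conjI ballI impI)
  show "upshadow Y B \<subseteq> ksets Y (Suc k)"
    using B upshadow_ksets[OF Y] unfolding final_segment_def by blast
  fix D E assume D: "D \<in> upshadow Y B" and E: "E \<in> ksets Y (Suc k)" and less: "binval D < binval E"
  obtain A x where A: "A \<in> B" "x \<in> Y" "x \<notin> A" "D = insert x A" using D by (rule upshadowE)
  have Ak: "A \<in> ksets Y k" using A B unfolding final_segment_def by auto
  have fin: "finite A" "finite E" using Ak E ksets_mem_finite[OF Y] by auto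
  have "binval A < binval D" using A(3,4) binval_insert[OF fin(1)] by simp
  then obtain y where y: "y \<in> E" "E - {y} = A \<or> binval A < binval (E - {y})"
    using exists_removal_above[OF fin] less Ak E unfolding ksets_def by auto
  have "E - {y} \<in> ksets Y k" using E y(1) fin unfolding ksets_def by auto
  then have "E - {y} \<in> B" using y(2) A(1) B unfolding final_segment_def by blast
  moreover have "y \<in> Y" using E y(1) unfolding ksets_def by blast
  ultimately have "insert y (E - {y}) \<in> upshadow Y B" by (intro upshadowI) auto
  then show "E \<in> upshadow Y B" using y(1) by (simp add: insert_absorb)
qed

text \<open>The \<open>x_i\<close>-decomposition \<open>V = V_0 \<oplus> x_i V_1\<close> of a monomial space corresponds to the
  deletion (sets avoiding \<open>i\<close>) and the link (sets \<open>S\<close> with \<open>S \<union> {i}\<close> in the family).\<close>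
definition deletion :: "nat \<Rightarrow> nat set set \<Rightarrow> nat set set" where
  "deletion i H = {S\<in>H. i \<notin> S}"

definition link :: "nat \<Rightarrow> nat set set \<Rightarrow> nat set set" where
  "link i H = {S. i \<notin> S \<and> insert i S \<in> H}"

lemma inj_on_insert_avoiding: "(\<And>S. S \<in> P \<Longrightarrow> i \<notin> S) \<Longrightarrow> inj_on (insert i) P"
  by (rule inj_onI) (metis Diff_insert_absorb)

lemma insert_link: "insert i ` link i H = {S\<in>H. i \<in> S}"
proof (rule set_eqI, rule iffI)
  fix S assume "S \<in> {S\<in>H. i \<in> S}"
  then have "S = insert i (S - {i})" "S - {i} \<in> link i H" by (auto simp: link_def insert_absorb)
  then show "S \<in> insert i ` link i H" by (metis imageI)
qed (auto simp: link_def)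

lemma family_decompose: "H = deletion i H \<union> insert i ` link i H"
  unfolding insert_link deletion_def by blast

lemma card_deletion_link:
  assumes "finite H"
  shows "card H = card (deletion i H) + card (link i H)"
proof -
  have "finite (insert i ` link i H)" using assms family_decompose[of H i] by (metis finite_Un)
  then have "card H = card (deletion i H) + card (insert i ` link i H)"
    using assms by (subst family_decompose[of H i], intro card_Un_disjoint) (auto simp: deletion_def)
  also have "card (insert i ` link i H) = card (link i H)"
    by (intro card_image inj_on_insert_avoiding) (auto simp: link_def)
  finally show ?thesis .
qed

lemma upshadow_decompose:
  assumes i: "i \<in> X"
  shows "upshadow X H = upshadow (X - {i}) (deletion i H)
           \<union> insert i ` (deletion i H \<union> upshadow (X - {i}) (link i H))"
proof (rule set_eqI, rule iffI)
  fix D assume "D \<in> upshadow X H"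
  then obtain S x where S: "S \<in> H" "x \<in> X" "x \<notin> S" "D = insert x S" by (rule upshadowE)
  show "D \<in> upshadow (X - {i}) (deletion i H) \<union> insert i ` (deletion i H \<union> upshadow (X - {i}) (link i H))"
  proof (cases "i \<in> S")
    case True
    then have "S - {i} \<in> link i H" using S(1) by (simp add: link_def insert_absorb)
    then have "insert x (S - {i}) \<in> upshadow (X - {i}) (link i H)"
      using S True by (intro upshadowI) auto
    moreover have "D = insert i (insert x (S - {i}))" using S True by auto
    ultimately show ?thesis by blast
  next
    case False
    then have "S \<in> deletion i H" using S(1) by (simp add: deletion_def)
    then show ?thesis using S by (cases "x = i") (auto intro: upshadowI)
  qed
next
  fix D
  assume "D \<in> upshadow (X - {i}) (deletion i H) \<union> insert i ` (deletion i H \<union> upshadow (X - {i}) (link i H))"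
  then consider "D \<in> upshadow (X - {i}) (deletion i H)" | "D \<in> insert i ` deletion i H"
    | E where "E \<in> upshadow (X - {i}) (link i H)" "D = insert i E" by blast
  then show "D \<in> upshadow X H"
  proof cases
    case 1
    then show ?thesis by (auto elim!: upshadowE intro!: upshadowI simp: deletion_def)
  next
    case 2
    then show ?thesis using i by (auto intro: upshadowI simp: deletion_def)
  next
    case 3
    obtain S x where S: "S \<in> link i H" "x \<in> X - {i}" "x \<notin> S" "E = insert x S"
      using 3(1) by (rule upshadowE)
    then have "insert x (insert i S) \<in> upshadow X H" by (intro upshadowI) (auto simp: link_def)
    then show ?thesis using 3 S by (simp add: insert_commute)
  qed
qed

lemma upshadow_avoiding: "(\<And>S. S \<in> F \<Longrightarrow> i \<notin> S) \<Longrightarrow> D \<in> upshadow (X - {i}) F \<Longrightarrow> i \<notin> D"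
  by (erule upshadowE) auto

text \<open>Both parts of the decomposition avoid \<open>i\<close>, so the union is disjoint and adding \<open>i\<close>
  is injective on the second part.\<close>
lemma card_upshadow_decompose:
  assumes X: "finite X" and i: "i \<in> X" and H: "H \<subseteq> Pow X"
  shows "card (upshadow X H) = card (upshadow (X - {i}) (deletion i H))
           + card (deletion i H \<union> upshadow (X - {i}) (link i H))"
proof -
  let ?Y = "X - {i}"
  let ?P = "deletion i H \<union> upshadow ?Y (link i H)"
  have del: "deletion i H \<subseteq> Pow ?Y" and lnk: "link i H \<subseteq> Pow ?Y"
    using H unfolding deletion_def link_def by auto
  have noi_del: "i \<notin> D" if "D \<in> upshadow ?Y (deletion i H)" for D
    using that by (rule upshadow_avoiding[rotated]) (simp add: deletion_def)
  have noi_P: "i \<notin> D" if "D \<in> ?P" for D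
    using that upshadow_avoiding[of "link i H" i D X] by (auto simp: deletion_def link_def)
  have fin: "finite (upshadow ?Y (deletion i H))" "finite ?P"
    using X del lnk finite_subset[OF del] finite_upshadow[of ?Y] by auto
  have "card (upshadow X H) = card (upshadow ?Y (deletion i H)) + card (insert i ` ?P)"
    unfolding upshadow_decompose[OF i] using fin noi_del by (intro card_Un_disjoint) auto
  also have "card (insert i ` ?P) = card ?P"
    using noi_P by (intro card_image inj_on_insert_avoiding)
  finally show ?thesis .
qed

lemma deletion_link_reassemble:
  assumes "\<forall>S\<in>A. i \<notin> S" "\<forall>S\<in>B. i \<notin> S"
  shows "deletion i (A \<union> insert i ` B) = A" "link i (A \<union> insert i ` B) = B"
proof -
  show "deletion i (A \<union> insert i ` B) = A" using assms(1) unfolding deletion_def by auto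
  have "insert i S \<notin> A" for S using assms(1) by blast
  moreover have "insert i S \<in> insert i ` B \<longleftrightarrow> S \<in> B" if "i \<notin> S" for S
    using inj_on_insert_avoiding[of "insert S B" i] that assms(2) by (auto simp: inj_on_def)
  ultimately show "link i (A \<union> insert i ` B) = B" using assms(2) unfolding link_def by auto
qed

lemma deletion_ksets: "M \<subseteq> ksets X d \<Longrightarrow> deletion i M \<subseteq> ksets (X - {i}) d"
  unfolding deletion_def ksets_def by auto

lemma link_ksets:
  assumes "finite X" "M \<subseteq> ksets X (Suc k)"
  shows "link i M \<subseteq> ksets (X - {i}) k"
proof
  fix S assume "S \<in> link i M"
  then have S: "i \<notin> S" "insert i S \<subseteq> X" "card (insert i S) = Suc k"
    using assms(2) unfolding link_def ksets_def by auto
  then have "finite S" using assms(1) by (meson finite_subset insert_subset)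
  then show "S \<in> ksets (X - {i}) k" using S unfolding ksets_def by auto
qed

lemma insert_ksets:
  assumes "finite Y" "i \<notin> Y" "B \<subseteq> ksets Y k"
  shows "insert i ` B \<subseteq> ksets (insert i Y) (Suc k)"
proof
  fix E assume "E \<in> insert i ` B"
  then obtain S where S: "S \<in> B" "E = insert i S" by blast
  then have "S \<subseteq> Y" "card S = k" using assms(3) unfolding ksets_def by auto
  moreover have "finite S" using \<open>S \<subseteq> Y\<close> assms(1) by (rule finite_subset)
  moreover have "i \<notin> S" using \<open>S \<subseteq> Y\<close> assms(2) by blast
  ultimately show "E \<in> ksets (insert i Y) (Suc k)"
    using S(2) assms(2) unfolding ksets_def by auto
qed

text \<open>This uses that final segments are nested.\<close>
lemma exists_link_replacement:
  assumes X: "finite X" and i: "i \<in> X" and M: "M \<subseteq> ksets X d"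
    and A: "final_segment (X - {i}) d A" "card A = card (deletion i M)"
  obtains B where "\<forall>S\<in>B. i \<notin> S" "insert i ` B \<subseteq> ksets X d" "card B = card (link i M)"
    "card (A \<union> upshadow (X - {i}) B) \<le> card (deletion i M \<union> upshadow (X - {i}) (link i M))"
proof -
  let ?Y = "X - {i}" and ?M0 = "deletion i M" and ?M1 = "link i M"
  have Y: "finite ?Y" using X by simp
  have fin: "finite ?M0" "finite (upshadow ?Y ?M1)"
    using M X ksets_finite[OF X] finite_upshadow[OF Y, of ?M1]
    by (auto simp: deletion_def link_def ksets_def intro: finite_subset)
  show thesis
  proof (cases "?M1 = {}")
    case True
    have "card A \<le> card (?M0 \<union> upshadow ?Y ?M1)" using A(2) fin by (simp add: card_mono)
    then show thesis using True by (intro that[of "{}"]) auto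
  next
    case False
    then obtain S where "insert i S \<in> M" unfolding link_def by blast
    then have "card (insert i S) = d" "finite (insert i S)"
      using M X unfolding ksets_def by (auto intro: finite_subset)
    then obtain k where d: "d = Suc k" by (cases d) auto
    have M1: "?M1 \<subseteq> ksets ?Y k" using link_ksets[OF X] M d by blast
    obtain B where B: "final_segment ?Y k B" "card B = card ?M1"
      "card (upshadow ?Y B) \<le> card (upshadow ?Y ?M1)"
      using kruskal_katona[OF Y M1] by blast
    have Bk: "B \<subseteq> ksets ?Y k" using B(1) unfolding final_segment_def by simp
    have "card (A \<union> upshadow ?Y B) = max (card A) (card (upshadow ?Y B))"
      using final_segment_upshadow[OF Y B(1)] A(1) d by (intro final_segment_card_Un[OF Y]) auto
    also have "\<dots> \<le> card (?M0 \<union> upshadow ?Y ?M1)"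
      using A(2) B(3) fin by (auto intro: le_trans[OF _ card_mono])
    moreover have "insert i ` B \<subseteq> ksets X d"
      using insert_ksets[OF Y _ Bk, of i] i d by (simp add: insert_absorb)
    ultimately show thesis using Bk B(2) by (intro that[of B]) (auto simp: ksets_def)
  qed
qed

lemma reassembled_family:
  assumes X: "finite X" and i: "i \<in> X" and M: "M \<subseteq> ksets X d"
    and A: "A \<subseteq> ksets (X - {i}) d" "card A = card (deletion i M)"
    and B: "\<forall>S\<in>B. i \<notin> S" "insert i ` B \<subseteq> ksets X d" "card B = card (link i M)"
  shows "A \<union> insert i ` B \<subseteq> ksets X d" "card (A \<union> insert i ` B) = card M"
    "card (upshadow X (A \<union> insert i ` B))
       = card (upshadow (X - {i}) A) + card (A \<union> upshadow (X - {i}) B)"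
proof -
  let ?G = "A \<union> insert i ` B"
  have "\<forall>S\<in>A. i \<notin> S" using A(1) unfolding ksets_def by auto
  note parts = deletion_link_reassemble[OF this B(1)]
  have "A \<subseteq> ksets X d" using A(1) ksets_mono[OF Diff_subset[of X "{i}"]] by (rule subset_trans)
  then show Gk: "?G \<subseteq> ksets X d" using B(2) by (rule Un_least)
  have fG: "finite ?G" using Gk ksets_finite[OF X] by (rule finite_subset)
  have fM: "finite M" using M ksets_finite[OF X] by (rule finite_subset)
  have "card ?G = card (deletion i ?G) + card (link i ?G)" by (rule card_deletion_link[OF fG])
  also have "\<dots> = card (deletion i M) + card (link i M)" by (simp only: parts A(2) B(3))
  also have "\<dots> = card M" by (rule card_deletion_link[OF fM, symmetric])
  finally show "card ?G = card M" .
  have GP: "?G \<subseteq> Pow X" using Gk ksets_Pow by (rule subset_trans)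
  show "card (upshadow X ?G) = card (upshadow (X - {i}) A) + card (A \<union> upshadow (X - {i}) B)"
    unfolding card_upshadow_decompose[OF X i GP] by (simp only: parts)
qed

text \<open>The combinatorial counterpart of the Gotzmann property.\<close>
definition shadow_minimal :: "nat set \<Rightarrow> nat \<Rightarrow> nat set set \<Rightarrow> bool" where
  "shadow_minimal X d M \<longleftrightarrow> M \<subseteq> ksets X d \<and>
     (\<forall>G. G \<subseteq> ksets X d \<and> card G = card M \<longrightarrow> card (upshadow X M) \<le> card (upshadow X G))"

text \<open>Otherwise a better deletion, made a final segment by
  Kruskal-Katona, together with a replaced link would beat \<open>M\<close>.\<close>
theorem shadow_minimal_deletion:
  assumes X: "finite X" and i: "i \<in> X" and M: "shadow_minimal X d M"
  shows "shadow_minimal (X - {i}) d (deletion i M)"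
  unfolding shadow_minimal_def
proof (intro conjI allI impI)
  let ?Y = "X - {i}" and ?M0 = "deletion i M" and ?M1 = "link i M"
  have Y: "finite ?Y" and Mk: "M \<subseteq> ksets X d" using X M unfolding shadow_minimal_def by auto
  show "?M0 \<subseteq> ksets ?Y d" using deletion_ksets[OF Mk] .
  fix G0 assume G0: "G0 \<subseteq> ksets ?Y d \<and> card G0 = card ?M0"
  show "card (upshadow ?Y ?M0) \<le> card (upshadow ?Y G0)"
  proof (rule ccontr)
    assume less: "\<not> ?thesis"
    obtain A where A: "final_segment ?Y d A" "card A = card G0" "card (upshadow ?Y A) \<le> card (upshadow ?Y G0)"
      using kruskal_katona[OF Y] G0 by blast
    have cA: "card A = card ?M0" using A(2) G0 by simp
    then obtain B where B: "\<forall>S\<in>B. i \<notin> S" "insert i ` B \<subseteq> ksets X d"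
      "card B = card ?M1" "card (A \<union> upshadow ?Y B) \<le> card (?M0 \<union> upshadow ?Y ?M1)"
      by (rule exists_link_replacement[OF X i Mk A(1)])
    have Ak: "A \<subseteq> ksets ?Y d" using A(1) unfolding final_segment_def by simp
    note G = reassembled_family[OF X i Mk Ak cA B(1-3)]
    have "card (upshadow X M) = card (upshadow ?Y ?M0) + card (?M0 \<union> upshadow ?Y ?M1)"
      using Mk ksets_Pow by (intro card_upshadow_decompose[OF X i]) blast
    also have "\<dots> > card (upshadow X (A \<union> insert i ` B))" using G(3) A(3) B(4) less by simp
    finally show False using M G(1,2) unfolding shadow_minimal_def by (meson leD)
  qed
qed

text \<open>The pointwise rule for \<open>fscale\<close> is not a simp rule, since simp would also unfold the
  scalar multiplication inside \<open>K.span\<close> and \<open>K.dependent\<close>.\<close>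
interpretation K: vector_space "fscale :: 'k::field \<Rightarrow> 'k elt \<Rightarrow> 'k elt"
  by (rule vector_space_fscale)

lemma fscale_apply: "fscale c f T = c * f T"
  by (simp add: fscale_def)

lemma sum_elt_apply: "(\<Sum>w\<in>t. f w) (T :: nat set) = (\<Sum>w\<in>t. f w T :: 'k::field)"
  by (induction t rule: infinite_finite_induct) auto

lemma mono_apply: "mono S T = (if T = S then 1 else 0)"
  by (simp add: mono_def)

lemma mono_eq_iff: "(mono S :: 'k::field elt) = mono T \<longleftrightarrow> S = T"
  by (metis mono_apply one_neq_zero)

text \<open>Evaluation at a fixed monomial is linear, so a coordinate that vanishes on a set of
  vectors vanishes on their span. This is the basic tool for all independence arguments.\<close>
lemma span_vanishing:
  assumes "\<forall>v\<in>S. v T = 0" and "(f :: 'k::field elt) \<in> kspan S"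
  shows "f T = 0"
proof -
  have "kspan S \<subseteq> {f :: 'k elt. f T = 0}"
    using assms(1) by (intro K.span_minimal) (auto simp: K.subspace_def fscale_apply)
  then show ?thesis using assms(2) by blast
qed

lemma Rdeg_subspace: "ksubspace (Rdeg X d :: 'k::field elt set)"
proof (rule K.subspaceI)
  show "0 \<in> (Rdeg X d :: 'k elt set)" unfolding Rdeg_def by simp
  fix f g :: "'k elt" and c :: 'k assume f: "f \<in> Rdeg X d" and g: "g \<in> Rdeg X d"
  show "f + g \<in> Rdeg X d"
  proof (unfold Rdeg_def, intro CollectI allI impI)
    fix S assume "(f + g) S \<noteq> 0"
    then have "f S \<noteq> 0 \<or> g S \<noteq> 0" by auto
    then show "S \<subseteq> X \<and> card S = d" using f g unfolding Rdeg_def by auto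
  qed
  show "fscale c f \<in> Rdeg X d" using f unfolding Rdeg_def by (auto simp: fscale_apply)
qed

lemma mono_Rdeg: "S \<in> ksets X d \<Longrightarrow> (mono S :: 'k::field elt) \<in> Rdeg X d"
  unfolding Rdeg_def ksets_def mono_def by auto

lemma span_monos_Rdeg: "M \<subseteq> ksets X d \<Longrightarrow> kspan (mono ` M) \<subseteq> (Rdeg X d :: 'k::field elt set)"
  by (intro K.span_minimal Rdeg_subspace image_subsetI mono_Rdeg) blast

lemma mono_in_span_monos_iff: "(mono S :: 'k::field elt) \<in> kspan (mono ` M) \<longleftrightarrow> S \<in> M"
proof
  assume S: "(mono S :: 'k elt) \<in> kspan (mono ` M)"
  show "S \<in> M"
  proof (rule ccontr)
    assume "S \<notin> M"
    then have "\<forall>v\<in>mono ` M. (v :: 'k elt) S = 0" by (auto simp: mono_apply)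
    then have "(mono S :: 'k elt) S = 0" using S by (rule span_vanishing)
    then show False by (simp add: mono_apply)
  qed
qed (simp add: K.span_base)

lemma inj_mono: "inj (mono :: nat set \<Rightarrow> 'k::field elt)"
  by (rule injI) (simp add: mono_eq_iff)

lemma monos_independent: "K.independent (mono ` M :: 'k::field elt set)"
  unfolding K.dependent_def
proof
  assume "\<exists>a\<in>mono ` M. a \<in> kspan ((mono ` M :: 'k elt set) - {a})"
  then obtain S where S: "S \<in> M" "(mono S :: 'k elt) \<in> kspan (mono ` M - {mono S})" by blast
  have "mono ` M - {mono S} = (mono ` (M - {S}) :: 'k elt set)"
    using image_set_diff[OF inj_mono[where 'k='k], of M "{S}"] by simp
  then show False using S mono_in_span_monos_iff[where 'k='k, of S "M - {S}"] by simp
qed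

lemma dim_span_monos: "kdim (kspan (mono ` M :: 'k::field elt set)) = card M"
  using K.dim_span_eq_card_independent[OF monos_independent[where 'k='k]]
    card_image[OF inj_on_subset[OF inj_mono[where 'k='k] subset_UNIV]] by simp

lemma mulvar_mono: "mulvar j (mono S :: 'k::field elt) = (if j \<in> S then 0 else mono (insert j S))"
  unfolding mulvar_def mono_def by (auto simp: fun_eq_iff)

lemma mulvar_hom: "module_hom fscale fscale (mulvar j :: 'k::field elt \<Rightarrow> 'k elt)"
  unfolding module_hom_iff using K.module_axioms by (auto simp: mulvar_def fun_eq_iff fscale_apply)

lemma m1_span_monos: "m1 X (kspan (mono ` M) :: 'k::field elt set) = kspan (mono ` upshadow X M)"
proof (rule antisym)
  show "m1 X (kspan (mono ` M)) \<subseteq> (kspan (mono ` upshadow X M) :: 'k elt set)"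
    unfolding m1_def
  proof (intro K.span_minimal K.subspace_span UN_least)
    fix j assume j: "j \<in> X"
    have "mulvar j (mono S) \<in> (kspan (mono ` upshadow X M) :: 'k elt set)" if S: "S \<in> M" for S
    proof (cases "j \<in> S")
      case False
      then have "insert j S \<in> upshadow X M" using S j by (intro upshadowI)
      then show ?thesis using False by (simp add: mulvar_mono K.span_base)
    qed (simp add: mulvar_mono K.span_zero)
    then have "mulvar j ` mono ` M \<subseteq> (kspan (mono ` upshadow X M) :: 'k elt set)" by blast
    then have "kspan (mulvar j ` mono ` M) \<subseteq> (kspan (mono ` upshadow X M) :: 'k elt set)"
      by (intro K.span_minimal K.subspace_span)
    then show "mulvar j ` kspan (mono ` M) \<subseteq> (kspan (mono ` upshadow X M) :: 'k elt set)"
      by (simp add: module_hom.span_image[OF mulvar_hom])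
  qed
  show "kspan (mono ` upshadow X M) \<subseteq> m1 X (kspan (mono ` M) :: 'k elt set)"
    unfolding m1_def
  proof (intro K.span_mono image_subsetI)
    fix D assume "D \<in> upshadow X M"
    then obtain S x where S: "S \<in> M" "x \<in> X" "x \<notin> S" "D = insert x S" by (rule upshadowE)
    then have "(mono D :: 'k elt) = mulvar x (mono S)" by (simp add: mulvar_mono)
    then show "(mono D :: 'k elt) \<in> (\<Union>j\<in>X. mulvar j ` kspan (mono ` M))"
      using S(1,2) by (auto intro: K.span_base)
  qed
qed

lemma finite_support_span:
  assumes "finite I" "\<forall>S. f S \<noteq> 0 \<longrightarrow> S \<in> I"
  shows "(f :: 'k::field elt) \<in> kspan (mono ` I)"
proof -
  have "f = (\<Sum>S\<in>I. fscale (f S) (mono S))"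
  proof
    fix T
    have "(\<Sum>S\<in>I. fscale (f S) (mono S)) T = (\<Sum>S\<in>I. if S = T then f T else 0)"
      unfolding sum_elt_apply by (rule sum.cong) (auto simp: mono_apply fscale_apply)
    also have "\<dots> = f T" using assms by (auto simp: sum.delta)
    finally show "f T = (\<Sum>S\<in>I. fscale (f S) (mono S)) T" by simp
  qed
  also have "\<dots> \<in> kspan (mono ` I)"
    by (intro K.span_sum K.span_scale K.span_base) auto
  finally show ?thesis .
qed

lemma Rdeg_span: "finite X \<Longrightarrow> (Rdeg X d :: 'k::field elt set) \<subseteq> kspan (mono ` ksets X d)"
  by (auto intro!: finite_support_span ksets_finite simp: Rdeg_def ksets_def)

text \<open>An independent subset of a space inside a finitely generated one is no larger than its
  dimension (the library states this only for finite-dimensional ambient spaces).\<close>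
lemma card_le_dim:
  assumes "K.independent (B :: 'k::field elt set)" "B \<subseteq> U" "U \<subseteq> kspan W" "finite W"
  shows "card B \<le> kdim U"
proof -
  obtain A where A: "A \<subseteq> U" "K.independent A" "U \<subseteq> kspan A" "card A = kdim U"
    using K.basis_exists by blast
  have "finite A" using K.independent_span_bound[OF assms(4) A(2)] A(1) assms(3) by blast
  then show ?thesis using K.independent_span_bound[OF _ assms(1)] assms(2) A by (metis subset_trans)
qed

definition lead :: "'k::field elt \<Rightarrow> nat set" where
  "lead f = (THE S. f S \<noteq> 0 \<and> (\<forall>T. f T \<noteq> 0 \<longrightarrow> binval T \<le> binval S))"

lemma Rdeg_support: "f \<in> Rdeg Y k \<Longrightarrow> f T \<noteq> 0 \<Longrightarrow> T \<in> ksets Y k"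
  unfolding Rdeg_def ksets_def by auto

lemma lead:
  assumes Y: "finite Y" and f: "f \<in> Rdeg Y k" and f0: "f \<noteq> 0"
  shows "f (lead f) \<noteq> 0" "\<And>T. f T \<noteq> 0 \<Longrightarrow> binval T \<le> binval (lead f)" "lead f \<in> ksets Y k"
proof -
  obtain S0 where S0: "f S0 \<noteq> 0" using f0 by (auto simp: fun_eq_iff)
  have "binval T < binval Y + 1" if "f T \<noteq> 0" for T
    using Rdeg_support[OF f that] binval_mono[OF Y] unfolding ksets_def by (simp add: le_imp_less_Suc)
  then obtain S where S: "f S \<noteq> 0" "\<And>T. f T \<noteq> 0 \<Longrightarrow> binval T \<le> binval S"
    using ex_has_greatest_nat[of "\<lambda>S. f S \<noteq> 0" S0 binval "binval Y + 1"] S0 by blast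
  have fin: "finite T" if "f T \<noteq> 0" for T using Rdeg_support[OF f that] ksets_mem_finite[OF Y] by blast
  have "lead f = S" unfolding lead_def
  proof (rule the_equality)
    fix S' assume S': "f S' \<noteq> 0 \<and> (\<forall>T. f T \<noteq> 0 \<longrightarrow> binval T \<le> binval S')"
    then have "binval S' = binval S" using S by (meson le_antisym)
    then show "S' = S" using binval_inj fin S(1) S' by blast
  qed (use S in blast)
  then show "f (lead f) \<noteq> 0" "\<And>T. f T \<noteq> 0 \<Longrightarrow> binval T \<le> binval (lead f)" "lead f \<in> ksets Y k"
    using S Rdeg_support[OF f S(1)] by auto
qed

lemma lead_eqI:
  assumes Y: "finite Y" and f: "f \<in> Rdeg Y k" and S: "f S \<noteq> 0"
    and above: "\<And>T. f T \<noteq> 0 \<Longrightarrow> binval T \<le> binval S"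
  shows "lead f = S"
proof -
  have f0: "f \<noteq> 0" using S by auto
  have "binval (lead f) = binval S" using lead[OF Y f f0] above S by (meson le_antisym)
  moreover have "finite S" "finite (lead f)"
    using Rdeg_support[OF f S] lead(3)[OF Y f f0] ksets_mem_finite[OF Y] by auto
  ultimately show ?thesis using binval_inj by blast
qed

lemma lead_zero_above:
  assumes Y: "finite Y" and f: "f \<in> Rdeg Y k" and less: "binval (lead f) < binval T"
  shows "f T = 0"
  using lead(2)[OF Y f] less by (cases "f = 0") (auto simp: not_le[symmetric])

definition initials :: "'k::field elt set \<Rightarrow> nat set set" where
  "initials U = lead ` (U - {0})"

lemma initials_ksets: "finite Y \<Longrightarrow> U \<subseteq> Rdeg Y k \<Longrightarrow> initials U \<subseteq> ksets Y k"
  unfolding initials_def using lead(3) by blast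

lemma finite_initials: "finite Y \<Longrightarrow> U \<subseteq> Rdeg Y k \<Longrightarrow> finite (initials U)"
  using initials_ksets ksets_finite by (metis finite_subset)

text \<open>Nonzero vectors with pairwise distinct leading sets are linearly independent
  (triangularity): adding a vector whose leading set is the largest so far keeps the family
  independent, since all earlier vectors vanish at that set.\<close>
lemma independent_distinct_leads:
  assumes Y: "finite Y"
  shows "finite L \<Longrightarrow> L \<subseteq> Rdeg Y k \<Longrightarrow> 0 \<notin> L \<Longrightarrow> inj_on lead L \<Longrightarrow> K.independent L"
proof (induction L rule: finite_ranking_induct[where f = "\<lambda>w. binval (lead w)"])
  case (insert x S)
  have "S \<subseteq> Rdeg Y k" "0 \<notin> S" using insert.prems(1,2) by blast+
  moreover have "inj_on lead S" using insert.prems(3) subset_insertI by (rule inj_on_subset)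
  ultimately have IH: "K.independent S" by (rule insert.IH)
  show ?case
  proof (cases "x \<in> S")
    case False
    have x: "x \<in> Rdeg Y k" "x \<noteq> 0" using insert.prems(1,2) by blast+
    have "y (lead x) = 0" if y: "y \<in> S" for y
    proof -
      have yR: "y \<in> Rdeg Y k" "y \<noteq> 0" using y insert.prems(1,2) by blast+
      have "lead y \<noteq> lead x" using y False insert.prems(3) by (auto simp: inj_on_def)
      then have "binval (lead y) \<noteq> binval (lead x)"
        using binval_inj lead(3)[OF Y] x yR ksets_mem_finite[OF Y] by metis
      then have "binval (lead y) < binval (lead x)" using insert.hyps(2)[OF y] by simp
      then show ?thesis by (rule lead_zero_above[OF Y yR(1)])
    qed
    then have "x \<notin> kspan S" using span_vanishing[of S "lead x" x] lead(1)[OF Y x] by blast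
    then show ?thesis using IH by (rule K.independent_insertI)
  qed (use IH in \<open>simp add: insert_absorb\<close>)
qed (simp add: K.independent_empty)

text \<open>Restriction to the initial sets is injective on \<open>U\<close>, hence \<open>dim U\<close> is at most the
  number of initial sets.\<close>
lemma dim_le_card_initials:
  assumes Y: "finite Y" and U: "ksubspace U" "U \<subseteq> (Rdeg Y k :: 'k::field elt set)"
  shows "kdim U \<le> card (initials U)"
proof -
  let ?I = "initials U"
  have finI: "finite ?I" using finite_initials[OF Y U(2)] .
  define r where "r f = (\<lambda>T. if T \<in> ?I then f T else (0 :: 'k))" for f :: "'k elt"
  have hom: "module_hom fscale fscale r"
    unfolding module_hom_iff r_def using K.module_axioms by (auto simp: fun_eq_iff fscale_apply)
  have "u = 0" if u: "u \<in> U" "r u = 0" for u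
  proof (rule ccontr)
    assume u0: "u \<noteq> 0"
    then have "lead u \<in> ?I" using u(1) unfolding initials_def by blast
    moreover have "r u (lead u) = 0" using u(2) by simp
    ultimately have "u (lead u) = 0" unfolding r_def by simp
    moreover have "u \<in> Rdeg Y k" using u(1) U(2) by blast
    ultimately show False using lead(1)[OF Y _ u0] by blast
  qed
  then have inj: "inj_on r U" using module_hom.inj_on_iff_eq_0[OF hom U(1)] by blast
  obtain B where B: "B \<subseteq> U" "K.independent B" "U \<subseteq> kspan B" "card B = kdim U"
    using K.basis_exists by blast
  have "kspan B = U" using B U(1) by (intro K.span_subspace)
  then have indep: "K.independent (r ` B)"
    using module_hom.independent_injective_image[OF hom B(2)] inj by simp
  have "r f \<in> kspan (mono ` ?I)" for f by (rule finite_support_span[OF finI]) (simp add: r_def)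
  then have "r ` B \<subseteq> kspan (mono ` ?I)" by blast
  then have "card (r ` B) \<le> card (mono ` ?I :: 'k elt set)"
    using K.independent_span_bound[OF finite_imageI[OF finI] indep] by blast
  also have "\<dots> \<le> card ?I" by (rule card_image_le[OF finI])
  finally show ?thesis using B card_image[OF inj_on_subset[OF inj B(1)]] by simp
qed

text \<open>Conversely, one vector of \<open>U\<close> for each initial set gives an independent family.\<close>
lemma card_initials_le_dim:
  assumes Y: "finite Y" and U: "U \<subseteq> (Rdeg Y k :: 'k::field elt set)"
  shows "card (initials U) \<le> kdim U"
proof -
  have "\<exists>f. f \<in> U - {0} \<and> lead f = T" if "T \<in> initials U" for T
    using that unfolding initials_def by blast
  then obtain rep where rep: "\<And>T. T \<in> initials U \<Longrightarrow> rep T \<in> U - {0} \<and> lead (rep T) = T"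
    by metis
  let ?L = "rep ` initials U"
  have inj: "inj_on rep (initials U)" by (rule inj_onI) (metis rep)
  have indep: "K.independent ?L"
    using rep U finite_initials[OF Y U]
    by (intro independent_distinct_leads[OF Y]) (auto simp: inj_on_def)
  have LU: "?L \<subseteq> U" using rep by blast
  have "U \<subseteq> kspan (mono ` ksets Y k)" using U Rdeg_span[OF Y] by (rule subset_trans)
  then have "card ?L \<le> kdim U"
    by (rule card_le_dim[OF indep LU _ finite_imageI[OF ksets_finite[OF Y]]])
  then show ?thesis using card_image[OF inj] by simp
qed

lemma mulvar_Rdeg:
  assumes Y: "finite Y" and j: "j \<in> Y" and f: "f \<in> Rdeg Y d"
  shows "mulvar j (f :: 'k::field elt) \<in> Rdeg Y (Suc d)"
  unfolding Rdeg_def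
proof (intro CollectI allI impI)
  fix T assume "mulvar j f T \<noteq> 0"
  then have jT: "j \<in> T" and fT: "f (T - {j}) \<noteq> 0" unfolding mulvar_def by (auto split: if_splits)
  have Tk: "T - {j} \<in> ksets Y d" using f fT by (rule Rdeg_support)
  then have "finite (T - {j})" by (rule ksets_mem_finite[OF Y])
  then have "finite T" by simp
  then have "card T = Suc (card (T - {j}))" using jT by (rule card_Suc_Diff1[symmetric])
  then show "T \<subseteq> Y \<and> card T = Suc d" using Tk jT j unfolding ksets_def by auto
qed

lemma m1_Rdeg:
  assumes Y: "finite Y" and W: "W \<subseteq> Rdeg Y d"
  shows "m1 Y W \<subseteq> (Rdeg Y (Suc d) :: 'k::field elt set)"
  unfolding m1_def
proof (intro K.span_minimal Rdeg_subspace UN_least image_subsetI)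
  fix j w assume "j \<in> Y" "w \<in> W"
  then show "mulvar j w \<in> (Rdeg Y (Suc d) :: 'k elt set)" using W by (intro mulvar_Rdeg[OF Y]) auto
qed

text \<open>Multiplying a vector by a variable \<open>x\<close> not in its leading set multiplies the leading
  monomial by \<open>x\<close>; hence the initial sets of \<open>m_1 W\<close> contain the upper shadow of those of \<open>W\<close>.\<close>
lemma upshadow_initials:
  assumes Y: "finite Y" and W: "W \<subseteq> (Rdeg Y d :: 'k::field elt set)"
  shows "upshadow Y (initials W) \<subseteq> initials (m1 Y W)"
proof
  fix D assume "D \<in> upshadow Y (initials W)"
  then obtain T x where T: "T \<in> initials W" "x \<in> Y" "x \<notin> T" "D = insert x T" by (rule upshadowE)
  obtain w where w: "w \<in> W" "w \<noteq> 0" "lead w = T" using T(1) unfolding initials_def by blast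
  have wR: "w \<in> Rdeg Y d" using w(1) W by blast
  note L = lead[OF Y wR w(2)]
  let ?g = "mulvar x w"
  have gm: "?g \<in> m1 Y W" unfolding m1_def using T(2) w(1) by (intro K.span_base) blast
  have gD: "?g D = w T" using T(3,4) unfolding mulvar_def by simp
  have fT: "finite T" using L(3) w(3) ksets_mem_finite[OF Y] by blast
  have "lead ?g = D"
  proof (rule lead_eqI[OF Y mulvar_Rdeg[OF Y T(2) wR]])
    show "?g D \<noteq> 0" using gD L(1) w(3) by simp
    fix T' assume "?g T' \<noteq> 0"
    then have xT': "x \<in> T'" and wT': "w (T' - {x}) \<noteq> 0" unfolding mulvar_def by (auto split: if_splits)
    have "finite (T' - {x})" using Rdeg_support[OF wR wT'] ksets_mem_finite[OF Y] by blast
    then have "binval T' = binval (T' - {x}) + 2 ^ x"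
      using binval_insert[of "T' - {x}" x] xT' by (simp add: insert_absorb)
    moreover have "binval D = binval T + 2 ^ x" using T(3,4) binval_insert[OF fT] by simp
    ultimately show "binval T' \<le> binval D" using L(2)[OF wT'] w(3) by simp
  qed
  moreover have "?g \<noteq> 0"
  proof
    assume "?g = 0"
    then have "?g D = 0" by simp
    then show False using gD L(1) w(3) by simp
  qed
  ultimately show "D \<in> initials (m1 Y W)" using gm unfolding initials_def by blast
qed

lemma exists_initial_family:
  assumes Y: "finite Y" and W: "ksubspace W" "W \<subseteq> (Rdeg Y d :: 'k::field elt set)"
  obtains A where "A \<subseteq> ksets Y d" "card A = kdim W" "card (upshadow Y A) \<le> kdim (m1 Y W)"
proof -
  obtain A where A: "A \<subseteq> initials W" "card A = kdim W"
    using dim_le_card_initials[OF Y W] by (meson obtain_subset_with_card_n)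
  have m1R: "m1 Y W \<subseteq> Rdeg Y (Suc d)" by (rule m1_Rdeg[OF Y W(2)])
  have "upshadow Y A \<subseteq> initials (m1 Y W)"
    using upshadow_mono[OF A(1)] upshadow_initials[OF Y W(2)] by (rule subset_trans)
  then have "card (upshadow Y A) \<le> card (initials (m1 Y W))"
    by (rule card_mono[OF finite_initials[OF Y m1R]])
  also have "\<dots> \<le> kdim (m1 Y W)" by (rule card_initials_le_dim[OF Y m1R])
  finally show thesis using A initials_ksets[OF Y W(2)] that by blast
qed

lemma gotzmann_span_monos_iff:
  assumes X: "finite X" and M: "M \<subseteq> ksets X d"
  shows "gotzmann X d (kspan (mono ` M) :: 'k::field elt set) \<longleftrightarrow> shadow_minimal X d M"
proof -
  let ?V = "kspan (mono ` M) :: 'k elt set"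
  have dimV: "kdim ?V = card M" and m1V: "kdim (m1 X ?V) = card (upshadow X M)"
    by (simp_all only: m1_span_monos dim_span_monos)
  have VR: "?V \<subseteq> Rdeg X d" using M by (rule span_monos_Rdeg)
  show ?thesis
  proof
    assume G: "gotzmann X d ?V"
    have min: "kdim (m1 X ?V) \<le> kdim (m1 X W)"
      if "ksubspace W" "W \<subseteq> Rdeg X d" "kdim W = kdim ?V" for W :: "'k elt set"
      using G that unfolding gotzmann_def by blast
    have "card (upshadow X M) \<le> card (upshadow X A)" if A: "A \<subseteq> ksets X d" "card A = card M" for A
    proof -
      let ?W = "kspan (mono ` A) :: 'k elt set"
      have "kdim (m1 X ?V) \<le> kdim (m1 X ?W)"
        using min[OF K.subspace_span span_monos_Rdeg[OF A(1)]] A(2) dimV by (simp only: dim_span_monos)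
      then show ?thesis by (simp only: m1_span_monos dim_span_monos)
    qed
    then show "shadow_minimal X d M" using M unfolding shadow_minimal_def by blast
  next
    assume S: "shadow_minimal X d M"
    have "kdim (m1 X ?V) \<le> kdim (m1 X W)"
      if W: "ksubspace W" "W \<subseteq> Rdeg X d" "kdim W = kdim ?V" for W :: "'k elt set"
    proof -
      obtain A where A: "A \<subseteq> ksets X d" "card A = kdim W" "card (upshadow X A) \<le> kdim (m1 X W)"
        using exists_initial_family[OF X W(1,2)] by blast
      then have "card (upshadow X M) \<le> card (upshadow X A)"
        using S W(3) dimV unfolding shadow_minimal_def by simp
      then show ?thesis using A(3) m1V by simp
    qed
    then show "gotzmann X d ?V" unfolding gotzmann_def using VR by simp
  qed
qed

lemma decomp0_span_monos: "decomp0 i (kspan (mono ` M) :: 'k::field elt set) = kspan (mono ` deletion i M)"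
  unfolding decomp0_def deletion_def by (simp add: mono_in_span_monos_iff conj_commute)

theorem proposition4p5:
  fixes n i d :: nat and V :: "'k::field elt set"
  assumes "i \<in> {1..n}"
    and "monomial_space {1..n} d V"
    and "gotzmann {1..n} d V"
  shows "gotzmann ({1..n} - {i}) d (decomp0 i V)"
proof -
  obtain M where M: "M \<subseteq> ksets {1..n} d" and V: "V = kspan (mono ` M)"
    using assms(2) unfolding monomial_space_def ksets_def by blast
  have "shadow_minimal {1..n} d M"
    using assms(3) unfolding V gotzmann_span_monos_iff[OF finite_atLeastAtMost M] .
  then have "shadow_minimal ({1..n} - {i}) d (deletion i M)"
    by (rule shadow_minimal_deletion[OF finite_atLeastAtMost assms(1)])
  then show ?thesis
    unfolding V decomp0_span_monos
    by (subst gotzmann_span_monos_iff[OF _ deletion_ksets[OF M]]) simp_all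
qed

end
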